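(* Let $N\ge 2$. Every isometry $T$ of $W_N$ (a bijection $T:W_N\to W_N$ with $\|T(\mathbf u)-T(\mathbf v)\|=\|\mathbf u-\mathbf v\|$ for all $\mathbf u,\mathbf v\in W_N$) satisfies $T(\mathbf 0)=\mathbf 0$, and consequently $T$ permutes the set of vertices $\{\mathbf v_1,\dots,\mathbf v_N\}$.
   Context: Let $N\ge 2$ be an integer and $\mathbb T=\{z\in\mathbb C:|z|=1\}$. For $\mathbf a=(a_1,\dots,a_{N-1})\in\mathbb R^{N-1}$ define $\mathbf c=(c_1,\dots,c_{N-1})\in\mathbb C^{N-1}$ by $c_j=\frac{\sqrt2}{2}(a_j+i\,a_{N-j})$ for $1\le j<N/2$, $c_{N/2}=a_{N/2}$ (only when $N$ is even), and $c_j=\frac{\sqrt2}{2}(a_{N-j}-i\,a_j)$ for $N/2<j\le N-1$ (so $c_{N-j}=\overline{c_j}$). Associate to $\mathbf a$ the monic polynomial $\mathbf a(x)=x^N+\sum_{n=1}^{N-1}c_nx^{N-n}+1$. Define $W_N=\{\mathbf a\in\mathbb R^{N-1}:\text{all roots of }\mathbf a(x)\text{ lie in }\mathbb T\}$, with the Euclidean metric; note $\mathbf 0\in W_N$ corresponds to $x^N+1$. Let $\zeta_N=e^{2\pi i/N}$. The vertices $\mathbf v_1,\dots,\mathbf v_N\in W_N$ are defined by $\mathbf v_n(x)=(x+\zeta_N^n)^N$, $1\le n\le N$. *)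

theory Defs
  imports "HOL-Analysis.Analysis" "HOL-Computational_Algebra.Polynomial"
begin

text \<open>Vectors of R^(N-1) are represented as functions nat => real whose
  coordinates are indexed by 1..N-1 and vanish outside that range.\<close>

definition vecs :: "nat \<Rightarrow> (nat \<Rightarrow> real) set" where
  "vecs N = {a. \<forall>j. (j < 1 \<or> N \<le> j) \<longrightarrow> a j = 0}"

definition edist :: "nat \<Rightarrow> (nat \<Rightarrow> real) \<Rightarrow> (nat \<Rightarrow> real) \<Rightarrow> real" where
  "edist N a b = sqrt (\<Sum>j=1..N-1. (a j - b j)^2)"

definition ccoef :: "nat \<Rightarrow> (nat \<Rightarrow> real) \<Rightarrow> nat \<Rightarrow> complex" where
  "ccoef N a j =
     (if 2 * j < N then complex_of_real (sqrt 2 / 2) * (complex_of_real (a j) + \<i> * complex_of_real (a (N - j)))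
      else if 2 * j = N then complex_of_real (a j)
      else complex_of_real (sqrt 2 / 2) * (complex_of_real (a (N - j)) - \<i> * complex_of_real (a j)))"

definition apoly :: "nat \<Rightarrow> (nat \<Rightarrow> real) \<Rightarrow> complex poly" where
  "apoly N a = monom 1 N + (\<Sum>n=1..N-1. monom (ccoef N a n) (N - n)) + 1"

definition W :: "nat \<Rightarrow> (nat \<Rightarrow> real) set" where
  "W N = {a \<in> vecs N. \<forall>z. poly (apoly N a) z = 0 \<longrightarrow> cmod z = 1}"

definition zetaN :: "nat \<Rightarrow> complex" where
  "zetaN N = cis (2 * pi / real N)"

definition vertex :: "nat \<Rightarrow> nat \<Rightarrow> (nat \<Rightarrow> real)" where
  "vertex N n = (THE a. a \<in> vecs N \<and> apoly N a = [:zetaN N ^ n, 1:] ^ N)"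

end

theory Submission
  imports Defs "HOL-Computational_Algebra.Fundamental_Theorem_Algebra"
begin

text \<open>
  Identify a point a with its coefficient vector c. This identification is an isometry,
  |a|^2 = sum |c_n|^2, and on W_N the coefficients of a monic polynomial with all roots on the
  unit circle satisfy |c_n| <= (N choose n). Hence W_N lies in the closed ball of squared radius
  R = sum (N choose n)^2 about 0, and its points on the boundary sphere are exactly the vertices:
  equality forces |c_1| = |sum of the roots| = N, so all roots coincide.
  For a \<noteq> 0 the cross terms cancel when summing over the vertices,
  sum_m |a - v_m|^2 = N (|a|^2 + R) > N R, so some vertex lies farther than sqrt R from a.
  Thus 0 is the only point of W_N within distance sqrt R of all of W_N. A surjective isometry
  preserves this property, so it fixes 0 and permutes the sphere of radius sqrt R about 0,
  which is the set of vertices.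
\<close>

section \<open>Isometries fixing a unique centre\<close>

lemma isometry_fixes_unique_center:
  fixes d :: "'a \<Rightarrow> 'a \<Rightarrow> 'b::order"
  assumes T: "bij_betw T S S" and iso: "\<forall>u\<in>S. \<forall>v\<in>S. d (T u) (T v) = d u v"
    and c: "c \<in> S" "\<forall>x\<in>S. d c x \<le> \<rho>"
    and unique: "\<forall>p\<in>S. (\<forall>x\<in>S. d p x \<le> \<rho>) \<longrightarrow> p = c"
  shows "T c = c"
proof -
  have "d (T c) x \<le> \<rho>" if "x \<in> S" for x
  proof -
    have "x \<in> T ` S" using T that by (simp add: bij_betw_def)
    then obtain u where "u \<in> S" "x = T u" by blast
    then show ?thesis using iso c by auto
  qed
  moreover have "T c \<in> S" using T c by (auto simp: bij_betw_def)
  ultimately show ?thesis using unique by blast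
qed

lemma isometry_fixing_center_maps_sphere:
  assumes T: "bij_betw T S S" and iso: "\<forall>u\<in>S. \<forall>v\<in>S. d (T u) (T v) = d u v"
    and c: "c \<in> S" "T c = c"
  shows "T ` {x\<in>S. d c x = \<rho>} = {x\<in>S. d c x = \<rho>}"
proof -
  have dist_c: "d c (T x) = d c x" if "x \<in> S" for x
    using iso c that by metis
  have image: "T ` S = S" using T by (simp add: bij_betw_def)
  show ?thesis
  proof (intro equalityI subsetI)
    fix y assume "y \<in> T ` {x\<in>S. d c x = \<rho>}"
    then show "y \<in> {x\<in>S. d c x = \<rho>}" using image dist_c by auto
  next
    fix y assume y: "y \<in> {x\<in>S. d c x = \<rho>}"
    then have "y \<in> T ` S" using image by simp
    then obtain x where "x \<in> S" "y = T x" by blast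
    then show "y \<in> T ` {x\<in>S. d c x = \<rho>}" using y dist_c by auto
  qed
qed

section \<open>Monic polynomials with roots in the unit disc\<close>

lemma coeff_mult_monic_linear_Suc:
  fixes q :: "'a::comm_semiring_1 poly"
  shows "coeff (q * [:c, 1:]) (Suc k) = c * coeff q (Suc k) + coeff q k"
  by (simp add: mult.commute[of q])

lemma prod_linear_factors_monic:
  fixes r :: "nat \<Rightarrow> 'a::idom"
  shows "degree (\<Prod>i<n. [:- r i, 1:]) = n" and "coeff (\<Prod>i<n. [:- r i, 1:]) n = 1"
proof -
  show deg: "degree (\<Prod>i<n. [:- r i, 1:]) = n"
    by (subst degree_prod_sum_eq) auto
  have "lead_coeff (\<Prod>i<n. [:- r i, 1:]) = 1"
    by (simp add: lead_coeff_prod)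
  then show "coeff (\<Prod>i<n. [:- r i, 1:]) n = 1" by (simp only: deg)
qed

lemma coeff_prod_linear_factors_subleading:
  fixes r :: "nat \<Rightarrow> 'a::idom"
  shows "coeff (\<Prod>i<Suc n. [:- r i, 1:]) n = - (\<Sum>i<Suc n. r i)"
proof (induction n)
  case (Suc n)
  let ?q = "\<Prod>i<Suc n. [:- r i, 1:]"
  have "coeff (\<Prod>i<Suc (Suc n). [:- r i, 1:]) (Suc n) = - r (Suc n) * coeff ?q (Suc n) + coeff ?q n"
    by (simp only: prod.lessThan_Suc[of _ "Suc n"] coeff_mult_monic_linear_Suc)
  also have "\<dots> = - r (Suc n) * 1 + - (\<Sum>i<Suc n. r i)"
    by (simp only: Suc.IH prod_linear_factors_monic(2))
  also have "\<dots> = - (\<Sum>i<Suc (Suc n). r i)" by simp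
  finally show ?case .
qed simp

lemma norm_coeff_prod_linear_factors_le:
  fixes r :: "nat \<Rightarrow> 'a::real_normed_field"
  assumes "\<forall>i<n. norm (r i) \<le> 1"
  shows "norm (coeff (\<Prod>i<n. [:- r i, 1:]) k) \<le> real (n choose k)"
  using assms
proof (induction n arbitrary: k)
  case 0
  then show ?case by (cases k) auto
next
  case (Suc n)
  let ?q = "\<Prod>i<n. [:- r i, 1:]"
  have IH: "norm (coeff ?q j) \<le> real (n choose j)" for j
    using Suc by auto
  have rn: "norm (r n) \<le> 1" using Suc.prems by auto
  have scaled: "norm (r n * coeff ?q j) \<le> real (n choose j)" for j
    using mult_mono[OF rn IH[of j]] by (simp add: norm_mult)
  show ?case
  proof (cases k)
    case 0
    then show ?thesis using scaled[of 0] by (simp add: mult.commute[of ?q])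
  next
    case (Suc j)
    have "norm (coeff (?q * [:- r n, 1:]) (Suc j)) \<le> norm (r n * coeff ?q (Suc j)) + norm (coeff ?q j)"
      using norm_triangle_ineq[of "- r n * coeff ?q (Suc j)"]
      by (simp add: coeff_mult_monic_linear_Suc)
    also have "\<dots> \<le> real (n choose Suc j) + real (n choose j)"
      using scaled IH by (intro add_mono)
    finally show ?thesis using Suc by simp
  qed
qed

lemma norm_sum_eq_card_imp_eq_mean:
  fixes r :: "nat \<Rightarrow> complex"
  assumes unit: "\<forall>i<n. cmod (r i) = 1" and sum: "cmod (\<Sum>i<n. r i) = n" and "i < n"
  shows "r i = (\<Sum>i<n. r i) / of_nat n"
proof -
  define s where "s = (\<Sum>i<n. r i)"
  define w where "w = s / of_nat n"
  have "n > 0" using \<open>i < n\<close> by simp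
  have ww: "w * cnj w = 1" and sw: "s = of_nat n * w"
    using sum \<open>n > 0\<close> complex_norm_square[of w]
    by (simp_all add: w_def s_def norm_divide)
  have rr: "r i * cnj (r i) = 1" if "i < n" for i
    using complex_norm_square[of "r i"] unit that by simp
  have "complex_of_real (\<Sum>i<n. cmod (r i - w)^2) = (\<Sum>i<n. (r i - w) * cnj (r i - w))"
    by (simp only: of_real_sum complex_norm_square)
  also have "\<dots> = (\<Sum>i<n. r i * cnj (r i) - r i * cnj w - w * cnj (r i) + w * cnj w)"
    by (intro sum.cong refl) (simp add: algebra_simps)
  also have "\<dots> = (\<Sum>i<n. 1 - r i * cnj w - w * cnj (r i) + w * cnj w)"
    by (intro sum.cong refl) (simp add: rr)
  also have "\<dots> = of_nat n - s * cnj w - w * cnj s + of_nat n * (w * cnj w)"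
    by (simp add: sum.distrib sum_subtractf sum_distrib_left sum_distrib_right s_def)
  also have "\<dots> = 0" using sw ww by (simp add: algebra_simps)
  finally have "(\<Sum>i<n. cmod (r i - w)^2) = 0" by (simp only: of_real_eq_0_iff)
  then have "cmod (r i - w)^2 = 0"
    using \<open>i < n\<close> by (subst (asm) sum_nonneg_eq_0_iff) auto
  then show ?thesis by (simp add: w_def s_def)
qed

section \<open>Roots of unity\<close>

lemma zetaN_pow: "zetaN N ^ k = cis (2 * pi * real k / real N)"
  unfolding zetaN_def Complex.DeMoivre by (simp add: mult_ac)

lemma norm_zetaN_pow [simp]: "norm (zetaN N ^ k) = 1"
  by (simp add: zetaN_pow)

lemma zetaN_pow_eq_1_iff:
  assumes "N > 0"
  shows "zetaN N ^ k = 1 \<longleftrightarrow> N dvd k"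
proof -
  have "zetaN N ^ k = exp (2 * of_real pi * \<i> * of_nat k / of_nat N)"
    by (simp add: zetaN_pow cis_conv_exp mult_ac)
  then show ?thesis using assms complex_root_unity_eq_1[of N k] by simp
qed

lemma cnj_zetaN_pow:
  assumes "N > 0" "k \<le> N"
  shows "cnj (zetaN N ^ k) = zetaN N ^ (N - k)"
proof -
  have "zetaN N ^ (N - k) * zetaN N ^ k = 1"
    using assms by (simp add: zetaN_pow_eq_1_iff flip: power_add)
  moreover have "cnj (zetaN N ^ k) * zetaN N ^ k = 1"
    using complex_norm_square[of "zetaN N ^ k"] by (simp add: mult.commute)
  ultimately show ?thesis
    by (metis mult_cancel_right mult_zero_left zero_neq_one)
qed

lemma root_of_unity_eq_zetaN_pow:
  assumes "N > 0" "z ^ N = 1"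
  shows "\<exists>m\<in>{1..N}. z = zetaN N ^ m"
proof -
  obtain k where k: "k < N" "z = zetaN N ^ k"
    using bij_betw_imp_surj_on[OF Complex.bij_betw_roots_unity[OF assms(1)]] assms(2)
    by (auto simp: zetaN_pow)
  show ?thesis
  proof (cases "k = 0")
    case True
    then show ?thesis using k assms(1) by (intro bexI[of _ N]) (auto simp: zetaN_pow_eq_1_iff)
  qed (use k in auto)
qed

lemma sum_zetaN_pow_eq_0:
  assumes "N > 0" "\<not> N dvd n"
  shows "(\<Sum>m=1..N. zetaN N ^ (m * n)) = 0"
proof -
  define u where "u = zetaN N ^ n"
  have "u \<noteq> 1" "u ^ N = 1"
    using assms by (simp_all add: u_def zetaN_pow_eq_1_iff flip: power_mult)
  have "(\<Sum>m=1..N. zetaN N ^ (m * n)) = (\<Sum>m<N. u ^ Suc m)"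
    by (simp add: u_def power_mult mult.commute[of _ n] sum.atLeast1_atMost_eq del: power_Suc)
  also have "\<dots> = u * (\<Sum>m<N. u ^ m)" by (simp add: sum_distrib_left)
  also have "\<dots> = 0" using \<open>u \<noteq> 1\<close> \<open>u ^ N = 1\<close> by (simp add: sum_gp_strict)
  finally show ?thesis .
qed

lemma sum_norm_diff_zetaN_pow_sq:
  assumes "N > 0" "\<not> N dvd n"
  shows "(\<Sum>m=1..N. cmod (c - b * zetaN N ^ (m * n))^2) = real N * (cmod c^2 + cmod b^2)"
proof -
  have norm_diff_sq: "cmod (c - z)^2 = cmod c^2 + cmod z^2 - 2 * Re (c * cnj z)" for z
    unfolding cmod_power2 by (simp add: power2_eq_square algebra_simps)
  have "(\<Sum>m=1..N. Re (c * cnj (b * zetaN N ^ (m * n)))) = Re (c * cnj b * cnj (\<Sum>m=1..N. zetaN N ^ (m * n)))"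
    by (simp only: Re_sum cnj_sum complex_cnj_mult sum_distrib_left mult.assoc)
  also have "\<dots> = 0" using sum_zetaN_pow_eq_0[OF assms] by simp
  finally have cross: "(\<Sum>m=1..N. Re (c * cnj (b * zetaN N ^ (m * n)))) = 0" .
  have "(\<Sum>m=1..N. cmod (c - b * zetaN N ^ (m * n))^2) =
      (\<Sum>m=1..N. cmod c^2 + cmod b^2) - 2 * (\<Sum>m=1..N. Re (c * cnj (b * zetaN N ^ (m * n))))"
    by (simp only: norm_diff_sq norm_mult norm_zetaN_pow mult_1_right sum_subtractf sum_distrib_left)
  then show ?thesis by (simp only: cross) simp
qed

section \<open>The coefficient map\<close>

lemma ccoef_diff: "ccoef N u n - ccoef N v n = ccoef N (\<lambda>j. u j - v j) n"
  by (simp add: ccoef_def algebra_simps)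

lemma ccoef_zero [simp]: "ccoef N (\<lambda>_. 0) n = 0"
  by (simp add: ccoef_def)

lemma norm_ccoef_sq: "cmod (ccoef N x n)^2 = (x n^2 + x (N - n)^2) / 2"
proof -
  have half: "(sqrt 2 / 2)^2 = (1/2::real)" by (simp add: power_divide)
  consider "2 * n < N" | "2 * n = N" | "2 * n > N" by linarith
  then show ?thesis
  proof cases
    case 2
    then have "N - n = n" by auto
    then show ?thesis using 2 by (simp add: ccoef_def cmod_power2)
  qed (simp_all add: ccoef_def cmod_power2 power_mult_distrib half field_simps)
qed

lemma sum_norm_ccoef_sq: "(\<Sum>n=1..N-1. cmod (ccoef N x n)^2) = (\<Sum>j=1..N-1. x j^2)"
proof -
  have "(\<Sum>n=1..N-1. cmod (ccoef N x n)^2) = (\<Sum>n=1..N-1. x n^2) / 2 + (\<Sum>n=1..N-1. x (N - n)^2) / 2"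
    by (simp add: norm_ccoef_sq sum_divide_distrib[symmetric] sum.distrib add_divide_distrib)
  also have "(\<Sum>n=1..N-1. x (N - n)^2) = (\<Sum>n=1..N-1. x n^2)"
    by (subst sum.atLeastAtMost_rev) (intro sum.cong refl, auto)
  finally show ?thesis by simp
qed

lemma edist_sq_eq_sum_ccoef:
  "edist N u v ^ 2 = (\<Sum>n=1..N-1. cmod (ccoef N u n - ccoef N v n)^2)"
  unfolding edist_def ccoef_diff sum_norm_ccoef_sq
  by (simp add: sum_nonneg)

lemma edist_zero_sq: "edist N (\<lambda>_. 0) a ^ 2 = (\<Sum>n=1..N-1. cmod (ccoef N a n)^2)"
  by (simp add: edist_sq_eq_sum_ccoef)

lemma vecs_sum_sq_eq_0_iff:
  assumes "a \<in> vecs N"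
  shows "(\<Sum>j=1..N-1. a j^2) = 0 \<longleftrightarrow> a = (\<lambda>_. 0)"
proof
  assume "(\<Sum>j=1..N-1. a j^2) = 0"
  then have inside: "a j = 0" if "j \<in> {1..N-1}" for j
    using that by (subst (asm) sum_nonneg_eq_0_iff) auto
  have "a j = 0" for j
  proof (cases "j \<in> {1..N-1}")
    case False
    then have "j < 1 \<or> N \<le> j" by auto
    then show ?thesis using assms unfolding vecs_def by blast
  qed (rule inside)
  then show "a = (\<lambda>_. 0)" by blast
qed simp

lemma coeff_apoly:
  assumes "N \<ge> 2"
  shows "coeff (apoly N a) k = (if k = 0 \<or> k = N then 1 else if k < N then ccoef N a (N - k) else 0)"
proof -
  have "coeff (\<Sum>n=1..N-1. monom (ccoef N a n) (N - n)) k =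
      (\<Sum>n\<in>{1..N-1}. if n = N - k then ccoef N a n else 0)"
    unfolding coeff_sum coeff_monom by (intro sum.cong refl) auto
  also have "\<dots> = (if 1 \<le> k \<and> k < N then ccoef N a (N - k) else 0)"
    by (subst sum.delta) auto
  finally show ?thesis
    using assms unfolding apoly_def coeff_add coeff_monom coeff_1 by auto
qed

lemma degree_apoly: "N \<ge> 2 \<Longrightarrow> degree (apoly N a) = N"
  by (intro order_antisym degree_le le_degree) (auto simp: coeff_apoly)

lemma ccoef_eq_coeff_apoly:
  assumes "N \<ge> 2" "n \<in> {1..N-1}"
  shows "ccoef N a n = coeff (apoly N a) (N - n)"
proof -
  have "N - (N - n) = n" "0 < N - n" "N - n < N" using assms by auto
  then show ?thesis using assms(1) by (simp add: coeff_apoly)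
qed

lemma inj_on_apoly:
  assumes "N \<ge> 2"
  shows "inj_on (apoly N) (vecs N)"
proof
  fix a b assume ab: "a \<in> vecs N" "b \<in> vecs N" "apoly N a = apoly N b"
  have "ccoef N (\<lambda>j. a j - b j) n = 0" if "n \<in> {1..N-1}" for n
    using ab(3) ccoef_eq_coeff_apoly[OF assms that, of a] ccoef_eq_coeff_apoly[OF assms that, of b]
    by (simp flip: ccoef_diff)
  then have "(\<Sum>n=1..N-1. cmod (ccoef N (\<lambda>j. a j - b j) n)^2) = 0" by simp
  then have "(\<Sum>j=1..N-1. (a j - b j)^2) = 0" by (simp only: sum_norm_ccoef_sq)
  moreover have "(\<lambda>j. a j - b j) \<in> vecs N" using ab by (simp add: vecs_def)
  ultimately have "(\<lambda>j. a j - b j) = (\<lambda>_. 0)" using vecs_sum_sq_eq_0_iff by blast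
  then show "a = b" by (simp add: fun_eq_iff)
qed

text \<open>Inverse of the coefficient map on sequences with c (N - n) = cnj (c n).\<close>
definition vec_of_ccoef :: "nat \<Rightarrow> (nat \<Rightarrow> complex) \<Rightarrow> nat \<Rightarrow> real" where
  "vec_of_ccoef N c j =
     (if 1 \<le> j \<and> 2 * j < N then sqrt 2 * Re (c j) else if 2 * j = N then Re (c j)
      else if N < 2 * j \<and> j < N then sqrt 2 * Im (c (N - j)) else 0)"

lemma vec_of_ccoef_in_vecs: "N \<ge> 2 \<Longrightarrow> vec_of_ccoef N c \<in> vecs N"
  by (auto simp: vecs_def vec_of_ccoef_def)

lemma ccoef_vec_of_ccoef:
  assumes sym: "\<And>n. n \<in> {1..N-1} \<Longrightarrow> c (N - n) = cnj (c n)" and n: "n \<in> {1..N-1}"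
  shows "ccoef N (vec_of_ccoef N c) n = c n"
proof -
  have s: "sqrt 2 / 2 * sqrt 2 = (1::real)" by simp
  consider "2 * n < N" | "2 * n = N" | "2 * n > N" by linarith
  then show ?thesis
  proof cases
    case 1
    then have "vec_of_ccoef N c n = sqrt 2 * Re (c n)" "vec_of_ccoef N c (N - n) = sqrt 2 * Im (c n)"
      using sym n by (auto simp: vec_of_ccoef_def)
    then show ?thesis using 1
      by (simp add: ccoef_def complex_eq_iff mult.assoc[symmetric] s)
  next
    case 2
    then have "N - n = n" by simp
    then have "c n = cnj (c n)" using sym[OF n] by simp
    then have "Im (c n) = 0" by (simp add: complex_eq_iff)
    then show ?thesis using 2 n by (simp add: ccoef_def vec_of_ccoef_def complex_eq_iff)
  next
    case 3
    have "N - n \<in> {1..N-1}" "N - (N - n) = n" using n by auto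
    then have "c n = cnj (c (N - n))" using sym[of "N - n"] by simp
    moreover have "vec_of_ccoef N c n = sqrt 2 * Im (c (N - n))"
      "vec_of_ccoef N c (N - n) = sqrt 2 * Re (c (N - n))"
      using 3 n by (auto simp: vec_of_ccoef_def)
    ultimately show ?thesis using 3
      by (simp add: ccoef_def complex_eq_iff mult.assoc[symmetric] s)
  qed
qed

lemma apoly_surj:
  assumes N: "N \<ge> 2" and deg: "degree p \<le> N" and ends: "coeff p 0 = 1" "coeff p N = 1"
    and sym: "\<And>k. k \<in> {1..N-1} \<Longrightarrow> coeff p k = cnj (coeff p (N - k))"
  shows "\<exists>a\<in>vecs N. apoly N a = p"
proof
  define c where "c n = coeff p (N - n)" for n
  have c_sym: "c (N - n) = cnj (c n)" if "n \<in> {1..N-1}" for n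
  proof -
    have "N - (N - n) = n" using that by auto
    then show ?thesis using sym[OF that] by (simp add: c_def)
  qed
  show "vec_of_ccoef N c \<in> vecs N" using N by (rule vec_of_ccoef_in_vecs)
  show "apoly N (vec_of_ccoef N c) = p"
  proof (rule poly_eqI)
    fix k
    consider "k = 0 \<or> k = N" | "0 < k \<and> k < N" | "N < k" by linarith
    then show "coeff (apoly N (vec_of_ccoef N c)) k = coeff p k"
    proof cases
      case 2
      then have k: "N - k \<in> {1..N-1}" "N - (N - k) = k" by auto
      have "coeff (apoly N (vec_of_ccoef N c)) k = ccoef N (vec_of_ccoef N c) (N - k)"
        using 2 N by (simp add: coeff_apoly)
      also have "\<dots> = c (N - k)"
        using ccoef_vec_of_ccoef[where c = c, OF c_sym k(1)] by simp
      finally show ?thesis using k(2) by (simp add: c_def)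
    next
      case 3
      then show ?thesis using N deg by (simp add: coeff_apoly coeff_eq_0)
    qed (use N ends in \<open>auto simp: coeff_apoly\<close>)
  qed
qed

lemma coeff_vertex_poly:
  assumes "k \<le> N"
  shows "coeff ([:zetaN N ^ m, 1:] ^ N) k = of_nat (N choose k) * zetaN N ^ (m * (N - k))"
  using assms by (simp add: coeff_linear_poly_power power_mult)

lemma vertex_spec:
  assumes N: "N \<ge> 2"
  shows "vertex N m \<in> vecs N" and "apoly N (vertex N m) = [:zetaN N ^ m, 1:] ^ N"
proof -
  let ?p = "[:zetaN N ^ m, 1:] ^ N"
  have sym: "coeff ?p k = cnj (coeff ?p (N - k))" if "k \<in> {1..N-1}" for k
  proof -
    have k: "k \<le> N" "N - (N - k) = k" using that by auto
    have "cnj (zetaN N ^ k) = zetaN N ^ (N - k)"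
      using k N by (intro cnj_zetaN_pow) auto
    then have "cnj ((zetaN N ^ k) ^ m) = (zetaN N ^ (N - k)) ^ m"
      by (metis complex_cnj_power)
    then have "cnj (zetaN N ^ (m * k)) = zetaN N ^ (m * (N - k))"
      by (simp only: power_mult[symmetric] mult.commute)
    moreover have "N choose (N - k) = N choose k"
      using k by (intro binomial_symmetric[symmetric])
    ultimately show ?thesis
      using k by (simp add: coeff_vertex_poly del: complex_cnj_power)
  qed
  have "\<exists>a\<in>vecs N. apoly N a = ?p"
    using N sym by (intro apoly_surj) (auto simp: degree_linear_power coeff_vertex_poly zetaN_pow_eq_1_iff)
  then have "\<exists>!a. a \<in> vecs N \<and> apoly N a = ?p"
    using inj_on_apoly[OF N] by (auto simp: inj_on_def)
  then have "vertex N m \<in> vecs N \<and> apoly N (vertex N m) = ?p"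
    unfolding vertex_def by (rule theI')
  then show "vertex N m \<in> vecs N" "apoly N (vertex N m) = ?p" by auto
qed

lemma ccoef_vertex:
  assumes "N \<ge> 2" "n \<in> {1..N-1}"
  shows "ccoef N (vertex N m) n = of_nat (N choose n) * zetaN N ^ (m * n)"
proof -
  have "N - (N - n) = n" using assms by auto
  then show ?thesis
    using assms by (simp add: ccoef_eq_coeff_apoly vertex_spec(2) coeff_vertex_poly binomial_symmetric[of n N])
qed

lemma vertex_in_W:
  assumes "N \<ge> 2"
  shows "vertex N m \<in> W N"
proof -
  have "cmod z = 1" if "poly (apoly N (vertex N m)) z = 0" for z
  proof -
    have "(zetaN N ^ m + z) ^ N = 0" using that assms by (simp add: vertex_spec poly_power)
    then have "z = - (zetaN N ^ m)" by (simp add: eq_neg_iff_add_eq_0 add.commute)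
    then show ?thesis by simp
  qed
  then show ?thesis using assms by (auto simp: W_def vertex_spec)
qed

lemma zero_in_W:
  assumes "N \<ge> 2"
  shows "(\<lambda>_. 0) \<in> W N"
proof -
  have "cmod z = 1" if "poly (apoly N (\<lambda>_. 0)) z = 0" for z
  proof -
    have "z ^ N = -1" using that by (simp add: apoly_def poly_monom eq_neg_iff_add_eq_0)
    then have "cmod z ^ N = 1" by (metis norm_minus_cancel norm_one norm_power)
    then show ?thesis using power_eq_imp_eq_base[of "cmod z" N 1] assms by simp
  qed
  then show ?thesis by (auto simp: W_def vecs_def)
qed

section \<open>The geometry of W_N\<close>

lemma apoly_eq_prod_unit_roots:
  assumes "N \<ge> 2" "a \<in> W N"
  obtains r where "apoly N a = (\<Prod>i<N. [:- r i, 1:])" "\<forall>i<N. cmod (r i) = 1"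
proof -
  obtain r where "smult (lead_coeff (apoly N a)) (\<Prod>i<degree (apoly N a). [:- r i, 1:]) = apoly N a"
    using complex_poly_decompose' by blast
  then have prod: "apoly N a = (\<Prod>i<N. [:- r i, 1:])"
    using assms(1) by (simp add: degree_apoly coeff_apoly)
  have "cmod (r i) = 1" if "i < N" for i
  proof -
    have "poly (apoly N a) (r i) = 0"
      unfolding prod poly_prod using that by (intro prod_zero) auto
    then show ?thesis using assms(2) by (auto simp: W_def)
  qed
  then show ?thesis using prod that by blast
qed

lemma norm_ccoef_le_binomial:
  assumes N: "N \<ge> 2" and "a \<in> W N" and n: "n \<in> {1..N-1}"
  shows "cmod (ccoef N a n) \<le> real (N choose n)"
proof -
  obtain r where prod: "apoly N a = (\<Prod>i<N. [:- r i, 1:])" and "\<forall>i<N. cmod (r i) = 1"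
    using apoly_eq_prod_unit_roots[OF N \<open>a \<in> W N\<close>] .
  then have "cmod (coeff (apoly N a) (N - n)) \<le> real (N choose (N - n))"
    unfolding prod by (intro norm_coeff_prod_linear_factors_le) auto
  moreover have "N choose (N - n) = N choose n"
    using n by (intro binomial_symmetric[symmetric]) auto
  ultimately show ?thesis by (simp add: ccoef_eq_coeff_apoly[OF N n])
qed

definition vertex_norm_sq :: "nat \<Rightarrow> real" where
  "vertex_norm_sq N = (\<Sum>n=1..N-1. real (N choose n)^2)"

lemma edist_zero_sq_le: "N \<ge> 2 \<Longrightarrow> a \<in> W N \<Longrightarrow> edist N (\<lambda>_. 0) a ^ 2 \<le> vertex_norm_sq N"
  unfolding edist_zero_sq vertex_norm_sq_def
  by (intro sum_mono power_mono norm_ccoef_le_binomial) auto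

lemma edist_zero_vertex_sq: "N \<ge> 2 \<Longrightarrow> edist N (\<lambda>_. 0) (vertex N m) ^ 2 = vertex_norm_sq N"
  unfolding edist_zero_sq vertex_norm_sq_def
  by (intro sum.cong refl) (simp add: ccoef_vertex norm_mult)

lemma sum_edist_vertex_sq:
  assumes N: "N \<ge> 2"
  shows "(\<Sum>m=1..N. edist N a (vertex N m) ^ 2) = real N * (edist N (\<lambda>_. 0) a ^ 2 + vertex_norm_sq N)"
proof -
  have "(\<Sum>m=1..N. edist N a (vertex N m) ^ 2) =
      (\<Sum>m=1..N. \<Sum>n=1..N-1. cmod (ccoef N a n - of_nat (N choose n) * zetaN N ^ (m * n))^2)"
    unfolding edist_sq_eq_sum_ccoef using N by (intro sum.cong refl) (simp add: ccoef_vertex)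
  also have "\<dots> = (\<Sum>n=1..N-1. \<Sum>m=1..N. cmod (ccoef N a n - of_nat (N choose n) * zetaN N ^ (m * n))^2)"
    by (rule sum.swap)
  also have "\<dots> = (\<Sum>n=1..N-1. real N * (cmod (ccoef N a n)^2 + real (N choose n)^2))"
  proof (intro sum.cong refl)
    fix n assume "n \<in> {1..N-1}"
    then have "\<not> N dvd n" using N by (auto dest: dvd_imp_le)
    then show "(\<Sum>m=1..N. cmod (ccoef N a n - of_nat (N choose n) * zetaN N ^ (m * n))^2) =
        real N * (cmod (ccoef N a n)^2 + real (N choose n)^2)"
      using sum_norm_diff_zetaN_pow_sq[OF _ \<open>\<not> N dvd n\<close>, of "ccoef N a n" "of_nat (N choose n)"] N
      by simp
  qed
  also have "\<dots> = real N * (edist N (\<lambda>_. 0) a ^ 2 + vertex_norm_sq N)"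
    by (simp only: edist_zero_sq vertex_norm_sq_def distrib_left sum.distrib sum_distrib_left)
  finally show ?thesis .
qed

lemma exists_far_vertex:
  assumes N: "N \<ge> 2" and a: "a \<in> vecs N" "a \<noteq> (\<lambda>_. 0)"
  shows "\<exists>m\<in>{1..N}. edist N a (vertex N m) ^ 2 > vertex_norm_sq N"
proof (rule ccontr)
  assume "\<not> ?thesis"
  then have "(\<Sum>m=1..N. edist N a (vertex N m) ^ 2) \<le> (\<Sum>m=1..N. vertex_norm_sq N)"
    by (intro sum_mono) (auto simp: not_less)
  then have "real N * edist N (\<lambda>_. 0) a ^ 2 \<le> 0"
    by (simp only: sum_edist_vertex_sq[OF N]) (simp add: algebra_simps)
  then have "edist N (\<lambda>_. 0) a ^ 2 \<le> 0"
    using N by (simp add: mult_le_0_iff)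
  moreover have "edist N (\<lambda>_. 0) a ^ 2 \<noteq> 0"
    using a(2) vecs_sum_sq_eq_0_iff[OF a(1)] unfolding edist_zero_sq sum_norm_ccoef_sq by simp
  ultimately show False by simp
qed

lemma norm_ccoef_1_if_edist_zero_sq_eq:
  assumes N: "N \<ge> 2" and "a \<in> W N" and eq: "edist N (\<lambda>_. 0) a ^ 2 = vertex_norm_sq N"
  shows "cmod (ccoef N a 1) = N"
proof -
  have "cmod (ccoef N a 1)^2 = real (N choose 1)^2"
  proof (rule sum_mono_inv[where f = "\<lambda>n. cmod (ccoef N a n)^2" and g = "\<lambda>n. real (N choose n)^2"])
    show "(\<Sum>n=1..N-1. cmod (ccoef N a n)^2) = (\<Sum>n=1..N-1. real (N choose n)^2)"
      using eq by (simp only: edist_zero_sq vertex_norm_sq_def)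
    show "cmod (ccoef N a n)^2 \<le> real (N choose n)^2" if "n \<in> {1..N-1}" for n
      using norm_ccoef_le_binomial[OF N \<open>a \<in> W N\<close> that] by (simp add: power_mono)
  qed (use N in auto)
  then show ?thesis by simp
qed

lemma vertex_if_edist_zero_sq_eq:
  assumes N: "N \<ge> 2" and "a \<in> W N" and eq: "edist N (\<lambda>_. 0) a ^ 2 = vertex_norm_sq N"
  shows "\<exists>m\<in>{1..N}. a = vertex N m"
proof -
  obtain r where prod: "apoly N a = (\<Prod>i<N. [:- r i, 1:])" and unit: "\<forall>i<N. cmod (r i) = 1"
    using apoly_eq_prod_unit_roots[OF N \<open>a \<in> W N\<close>] .
  have sum_roots: "ccoef N a 1 = - (\<Sum>i<N. r i)"
  proof -
    obtain M where M: "N = Suc M" using N by (cases N) auto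
    have "ccoef N a 1 = coeff (apoly N a) M"
      using N M by (simp add: ccoef_eq_coeff_apoly)
    also have "\<dots> = - (\<Sum>i<N. r i)"
      unfolding prod unfolding M by (rule coeff_prod_linear_factors_subleading)
    finally show ?thesis .
  qed
  then have "cmod (\<Sum>i<N. r i) = N"
    using norm_ccoef_1_if_edist_zero_sq_eq[OF assms] by simp
  define w where "w = (\<Sum>i<N. r i) / of_nat N"
  have "r i = w" if "i < N" for i
    unfolding w_def by (rule norm_sum_eq_card_imp_eq_mean[OF unit \<open>cmod (\<Sum>i<N. r i) = N\<close> that])
  then have "apoly N a = (\<Prod>i<N. [:- w, 1:])"
    unfolding prod by (intro prod.cong) auto
  then have "apoly N a = [:- w, 1:] ^ N" by simp
  moreover have "(- w) ^ N = 1"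
    using arg_cong[OF calculation, of "\<lambda>p. coeff p 0"] N by (simp add: coeff_apoly coeff_0_power)
  then obtain m where "m \<in> {1..N}" "- w = zetaN N ^ m"
    using root_of_unity_eq_zetaN_pow[of N "- w"] N by auto
  ultimately have "apoly N a = apoly N (vertex N m)" using N by (simp add: vertex_spec)
  then have "a = vertex N m"
    using N \<open>a \<in> W N\<close> by (intro inj_onD[OF inj_on_apoly]) (auto simp: W_def vertex_spec)
  then show ?thesis using \<open>m \<in> {1..N}\<close> by blast
qed

lemma zero_if_W_within_vertex_norm:
  assumes N: "N \<ge> 2" and "p \<in> W N" and near: "\<forall>x\<in>W N. edist N p x ^ 2 \<le> vertex_norm_sq N"
  shows "p = (\<lambda>_. 0)"
proof (rule ccontr)
  assume "p \<noteq> (\<lambda>_. 0)"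
  then obtain m where "edist N p (vertex N m) ^ 2 > vertex_norm_sq N"
    using exists_far_vertex[OF N] \<open>p \<in> W N\<close> by (auto simp: W_def)
  moreover have "edist N p (vertex N m) ^ 2 \<le> vertex_norm_sq N"
    using near vertex_in_W[OF N] by blast
  ultimately show False by simp
qed

lemma vertices_eq_W_sphere:
  assumes "N \<ge> 2"
  shows "{vertex N n | n. n \<in> {1..N}} = {x \<in> W N. edist N (\<lambda>_. 0) x ^ 2 = vertex_norm_sq N}"
  using vertex_in_W[OF assms] edist_zero_vertex_sq[OF assms] vertex_if_edist_zero_sq_eq[OF assms]
  by blast

theorem mainTheorem11:
  fixes N :: nat and T :: "(nat \<Rightarrow> real) \<Rightarrow> (nat \<Rightarrow> real)"
  assumes "N \<ge> 2"
    and "bij_betw T (W N) (W N)"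
    and "\<forall>u\<in>W N. \<forall>v\<in>W N. edist N (T u) (T v) = edist N u v"
  shows "T (\<lambda>_. 0) = (\<lambda>_. 0) \<and>
         T ` {vertex N n | n. n \<in> {1..N}} = {vertex N n | n. n \<in> {1..N}}"
proof -
  let ?d = "\<lambda>u v. edist N u v ^ 2"
  have iso: "\<forall>u\<in>W N. \<forall>v\<in>W N. ?d (T u) (T v) = ?d u v"
    using assms(3) by simp
  have center: "\<forall>x\<in>W N. ?d (\<lambda>_. 0) x \<le> vertex_norm_sq N"
    using edist_zero_sq_le[OF assms(1)] by blast
  have unique: "\<forall>p\<in>W N. (\<forall>x\<in>W N. ?d p x \<le> vertex_norm_sq N) \<longrightarrow> p = (\<lambda>_. 0)"
    using zero_if_W_within_vertex_norm[OF assms(1)] by blast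
  have fixed: "T (\<lambda>_. 0) = (\<lambda>_. 0)"
    using isometry_fixes_unique_center[OF assms(2) iso zero_in_W[OF assms(1)] center unique] .
  show ?thesis
    using fixed vertices_eq_W_sphere[OF assms(1)]
      isometry_fixing_center_maps_sphere[OF assms(2) iso zero_in_W[OF assms(1)] fixed] by simp
qed

end
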